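(* Let $\mathcal{U}$ be the map $(\beta,u)\mapsto\mathcal{U}(\beta,u)=\int_0^1\mathcal{K}(\beta)(1-y)u(y)\,dy\in\mathbb{R}$, defined on pairs $(\beta,u)$ of continuous functions on $[0,1]$. For arbitrary $B_\beta,B_u>0$, $\mathcal U$ is Lipschitz on the set of pairs of Lipschitz functions with $\|\beta\|_\infty\le B_\beta$, $\|u\|_\infty\le B_u$: for any two such pairs, $$|\mathcal U(\beta_1,u_1)-\mathcal U(\beta_2,u_2)|\le\big(B_\beta e^{B_\beta}+B_ue^{3B_\beta}\big)\,\|(\beta_1-\beta_2,u_1-u_2)\|_\infty,$$ where $\|(a,b)\|_\infty=\max(\|a\|_\infty,\|b\|_\infty)$.
   Context: The backstepping kernel operator $\mathcal{K}$ maps $\beta\in C^0[0,1]$ to the solution $k$ of $k(x)=-\beta(x)+\int_0^x\beta(x-y)k(y)\,dy$, $x\in[0,1]$. $\|\cdot\|_\infty$ is the supremum norm on $[0,1]$. *)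

theory Defs
  imports "HOL-Analysis.Analysis"
begin

definition supnorm :: "(real \<Rightarrow> real) \<Rightarrow> real" where
  "supnorm f = (SUP x\<in>{0..1}. \<bar>f x\<bar>)"

text \<open>Backstepping kernel operator: the continuous solution k on [0,1] of
  k(x) = -beta(x) + integral_0^x beta(x-y) k(y) dy; normalised to 0 outside [0,1]
  so that it is uniquely determined.\<close>
definition kernel_op :: "(real \<Rightarrow> real) \<Rightarrow> (real \<Rightarrow> real)" where
  "kernel_op \<beta> = (THE k. continuous_on {0..1} k \<and>
      (\<forall>x\<in>{0..1}. k x = - \<beta> x + integral {0..x} (\<lambda>y. \<beta> (x - y) * k y)) \<and>
      (\<forall>x. x \<notin> {0..1} \<longrightarrow> k x = 0))"

definition U_op :: "(real \<Rightarrow> real) \<Rightarrow> (real \<Rightarrow> real) \<Rightarrow> real" where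
  "U_op \<beta> u = integral {0..1} (\<lambda>y. kernel_op \<beta> (1 - y) * u y)"

end

theory Submission
  imports Defs
begin

(* The kernel k = K(beta) solves the linear Volterra equation k(x) = -beta(x) + (beta * k)(x),
   where * is convolution over [0, x].  It is the uniform limit of the Picard iterates, whose
   increments are bounded by B^(n+1) x^n / n! when |beta| <= B.  A single Gronwall estimate
   compares two solutions k1, k2 with data beta1, beta2 (where |beta2| <= B):
   |k1 - k2| <= |beta1 - beta2|_oo (1 + |k1|_oo) e^B.  It gives uniqueness (beta1 = beta2),
   the bound |k| <= B e^B (compare with the zero solution for beta1 = 0), and
   |K(beta1) - K(beta2)| <= e^(3B) |beta1 - beta2|_oo because (1 + B e^B) e^B <= e^(3B).
   Writing U(beta1,u1) - U(beta2,u2) = int (k1 - k2)(1-y) u1 + int k2(1-y) (u1 - u2) finishes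
   the proof; the Lipschitz hypotheses are only needed for continuity. *)

lemma abs_le_supnorm:
  assumes "continuous_on {0..1} f" and "x \<in> {0..1}"
  shows "\<bar>f x\<bar> \<le> supnorm f"
proof -
  have "compact ((\<lambda>x. \<bar>f x\<bar>) ` {0..1::real})"
    using assms(1) by (intro compact_continuous_image continuous_intros) auto
  then have "bdd_above ((\<lambda>x. \<bar>f x\<bar>) ` {0..1::real})"
    by (intro bounded_imp_bdd_above compact_imp_bounded)
  then show ?thesis
    unfolding supnorm_def using assms(2) by (intro cSUP_upper) auto
qed

lemma supnorm_nonneg: "continuous_on {0..1} f \<Longrightarrow> 0 \<le> supnorm f"
  using abs_le_supnorm[of f 0] by fastforce

lemma gronwall_integral_inequality:
  fixes d :: "real \<Rightarrow> real"
  assumes cont: "continuous_on {0..T} d" and "B \<ge> 0"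
    and ineq: "\<And>t. t \<in> {0..T} \<Longrightarrow> d t \<le> a + B * integral {0..t} d"
    and x: "x \<in> {0..T}"
  shows "d x \<le> a * exp (B * x)"
proof -
  define I where "I t = integral {0..t} d" for t
  define \<phi> where "\<phi> t = exp (- B * t) * (a + B * I t)" for t
  have "continuous_on {0..T} I"
    unfolding I_def by (intro indefinite_integral_continuous_1 integrable_continuous_interval cont)
  then have "continuous_on {0..x} \<phi>"
    unfolding \<phi>_def using x by (auto intro!: continuous_intros elim: continuous_on_subset)
  then have "\<phi> x \<le> \<phi> 0"
  proof (rule DERIV_nonpos_imp_decreasing_open[rotated 2])
    fix t assume t: "0 < t" "t < x"
    have "(I has_real_derivative d t) (at t within {0..T})"
      unfolding I_def using t x by (intro integral_has_real_derivative cont) auto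
    moreover have "at t within {0..T} = at t"
      using t x by (intro at_within_Icc_at) auto
    ultimately have "(\<phi> has_real_derivative exp (- B * t) * B * (d t - (a + B * I t))) (at t)"
      unfolding \<phi>_def by (auto intro!: derivative_eq_intros simp: algebra_simps)
    moreover have "exp (- B * t) * B * (d t - (a + B * I t)) \<le> 0"
      using ineq[of t] t x \<open>B \<ge> 0\<close> unfolding I_def
      by (intro mult_nonneg_nonpos) auto
    ultimately show "\<exists>y. (\<phi> has_real_derivative y) (at t) \<and> y \<le> 0" by blast
  qed (use x in auto)
  have "d x \<le> a + B * I x"
    using ineq[OF x] unfolding I_def .
  also have "\<dots> = exp (B * x) * \<phi> x"
    unfolding \<phi>_def by (simp add: exp_minus field_simps)
  also have "\<dots> \<le> exp (B * x) * a"
    using \<open>\<phi> x \<le> \<phi> 0\<close> by (intro mult_left_mono) (auto simp: \<phi>_def I_def)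
  finally show ?thesis by (simp add: mult.commute)
qed

lemma integral_power_0:
  assumes "0 \<le> (x::real)"
  shows "integral {0..x} (\<lambda>y. y ^ m) = x ^ Suc m / Suc m"
proof -
  have "((\<lambda>y. y ^ m) has_integral (x ^ Suc m / Suc m - 0 ^ Suc m / Suc m)) {0..x}"
  proof (rule fundamental_theorem_of_calculus[OF assms])
    fix t :: real
    have "((\<lambda>y. y ^ Suc m / Suc m) has_real_derivative Suc m * t ^ m / Suc m) (at t)"
      using DERIV_pow[of "Suc m" t] by (intro DERIV_cdivide) (simp del: of_nat_Suc)
    then show "((\<lambda>y. y ^ Suc m / Suc m) has_vector_derivative t ^ m) (at t within {0..x})"
      by (auto simp: has_real_derivative_iff_has_vector_derivative[symmetric]
          intro: has_field_derivative_at_within)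
  qed
  then show ?thesis by (simp add: integral_unique)
qed

definition volterra_conv :: "(real \<Rightarrow> real) \<Rightarrow> (real \<Rightarrow> real) \<Rightarrow> real \<Rightarrow> real" where
  "volterra_conv \<beta> h x = integral {0..x} (\<lambda>y. \<beta> (x - y) * h y)"

lemma continuous_on_volterra_integrand:
  fixes \<beta> h :: "real \<Rightarrow> real"
  assumes "continuous_on {0..1} \<beta>" "continuous_on {0..1} h" "x \<in> {0..1::real}"
  shows "continuous_on {0..x} (\<lambda>y. \<beta> (x - y) * h y)"
proof -
  have "continuous_on {0..x} (\<lambda>y. \<beta> (x - y))"
    using assms(3) by (intro continuous_on_compose2[OF assms(1)] continuous_intros) auto
  moreover have "continuous_on {0..x} h"
    using assms(3) by (intro continuous_on_subset[OF assms(2)]) auto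
  ultimately show ?thesis by (rule continuous_on_mult')
qed

(* The substitution y = x s moves the dependence on x from the domain of integration into the
   integrand, where continuity of parameter integrals applies. *)
lemma volterra_conv_rescaled:
  assumes "continuous_on {0..1} \<beta>" "continuous_on {0..1} h" "x \<in> {0..1::real}"
  shows "volterra_conv \<beta> h x = integral {0..1} (\<lambda>s. x * (\<beta> (x * (1 - s)) * h (x * s)))"
proof -
  have "((\<lambda>s. x *\<^sub>R (\<beta> (x - x * s) * h (x * s)))
      has_integral integral {x * 0..x * 1} (\<lambda>y. \<beta> (x - y) * h y)) {0..1}"
    using assms(3)
    by (intro has_integral_substitution[where c = 0 and d = x]
        continuous_on_volterra_integrand[OF assms]) (auto intro!: derivative_eq_intros simp: mult_left_le)
  then have "integral {0..1} (\<lambda>s. x *\<^sub>R (\<beta> (x - x * s) * h (x * s)))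
      = integral {x * 0..x * 1} (\<lambda>y. \<beta> (x - y) * h y)"
    by (rule integral_unique)
  then show ?thesis
    unfolding volterra_conv_def by (simp add: right_diff_distrib)
qed

lemma continuous_on_volterra_conv:
  assumes "continuous_on {0..1} \<beta>" "continuous_on {0..1} h"
  shows "continuous_on {0..1} (volterra_conv \<beta> h)"
proof -
  have "continuous_on ({0..1} \<times> {0..1}) (\<lambda>(x, s). x * (\<beta> (x * (1 - s)) * h (x * s)))"
    unfolding case_prod_beta
    by (intro continuous_intros continuous_on_compose2[OF assms(1)]
        continuous_on_compose2[OF assms(2)]) (auto simp: mult_le_one)
  then have "continuous_on {0..1} (\<lambda>x. integral (cbox 0 1) (\<lambda>s. x * (\<beta> (x * (1 - s)) * h (x * s))))"
    by (intro integral_continuous_on_param) simp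
  then show ?thesis
    by (rule continuous_on_eq) (simp add: volterra_conv_rescaled[OF assms])
qed

lemma volterra_conv_diff:
  assumes "continuous_on {0..1} \<beta>1" "continuous_on {0..1} \<beta>2"
    and "continuous_on {0..1} h1" "continuous_on {0..1} h2" "x \<in> {0..1}"
  shows "volterra_conv \<beta>1 h1 x - volterra_conv \<beta>2 h2 x
    = volterra_conv (\<lambda>s. \<beta>1 s - \<beta>2 s) h1 x + volterra_conv \<beta>2 (\<lambda>y. h1 y - h2 y) x"
proof -
  have integrable: "(\<lambda>y. b (x - y) * h y) integrable_on {0..x}"
    if "continuous_on {0..1} b" "continuous_on {0..1} h" for b h :: "real \<Rightarrow> real"
    using that assms(5) by (intro integrable_continuous_interval continuous_on_volterra_integrand)
  have "volterra_conv \<beta>1 h1 x - volterra_conv \<beta>2 h2 x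
      = integral {0..x} (\<lambda>y. \<beta>1 (x - y) * h1 y - \<beta>2 (x - y) * h2 y)"
    unfolding volterra_conv_def by (intro integral_diff[symmetric] integrable assms)
  also have "\<dots> = integral {0..x}
      (\<lambda>y. (\<beta>1 (x - y) - \<beta>2 (x - y)) * h1 y + \<beta>2 (x - y) * (h1 y - h2 y))"
    by (simp add: algebra_simps)
  also have "\<dots> = volterra_conv (\<lambda>s. \<beta>1 s - \<beta>2 s) h1 x + volterra_conv \<beta>2 (\<lambda>y. h1 y - h2 y) x"
    unfolding volterra_conv_def
    using assms by (intro integral_add integrable continuous_intros)
  finally show ?thesis .
qed

lemma abs_volterra_conv_le:
  assumes "continuous_on {0..1} \<beta>" "continuous_on {0..1} h" "x \<in> {0..1}"
    and "\<And>y. y \<in> {0..1} \<Longrightarrow> \<bar>\<beta> y\<bar> \<le> B"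
  shows "\<bar>volterra_conv \<beta> h x\<bar> \<le> B * integral {0..x} (\<lambda>y. \<bar>h y\<bar>)"
proof -
  have "norm (volterra_conv \<beta> h x) \<le> integral {0..x} (\<lambda>y. B * \<bar>h y\<bar>)"
    unfolding volterra_conv_def
  proof (rule integral_norm_bound_integral)
    have "continuous_on {0..x} h"
      using assms(3) by (intro continuous_on_subset[OF assms(2)]) auto
    then show "(\<lambda>y. B * \<bar>h y\<bar>) integrable_on {0..x}"
      by (intro integrable_continuous_interval continuous_intros)
    fix y assume "y \<in> {0..x}"
    then have "\<bar>\<beta> (x - y)\<bar> \<le> B" using assms(3) by (intro assms(4)) auto
    then show "norm (\<beta> (x - y) * h y) \<le> B * \<bar>h y\<bar>"
      by (simp add: abs_mult mult_right_mono)
  qed (intro integrable_continuous_interval continuous_on_volterra_integrand assms)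
  then show ?thesis by simp
qed

lemma abs_volterra_conv_le_mult:
  assumes "continuous_on {0..1} \<beta>" "continuous_on {0..1} h" "x \<in> {0..1}"
    and "\<And>y. y \<in> {0..1} \<Longrightarrow> \<bar>\<beta> y\<bar> \<le> B" "\<And>y. y \<in> {0..1} \<Longrightarrow> \<bar>h y\<bar> \<le> M"
  shows "\<bar>volterra_conv \<beta> h x\<bar> \<le> B * M"
proof -
  have "norm (volterra_conv \<beta> h x) \<le> B * M * (x - 0)"
    unfolding volterra_conv_def
  proof (rule integral_bound)
    fix y assume "y \<in> {0..x}"
    then have "\<bar>\<beta> (x - y)\<bar> \<le> B" "\<bar>h y\<bar> \<le> M"
      using assms(3) by (auto intro!: assms(4,5))
    then show "norm (\<beta> (x - y) * h y) \<le> B * M"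
      by (simp add: abs_mult mult_mono')
  qed (use assms in \<open>auto intro: continuous_on_volterra_integrand\<close>)
  also have "B * M * (x - 0) \<le> B * M"
    using assms(3) assms(4,5)[of 0] by (intro mult_left_le) auto
  finally show ?thesis by simp
qed

lemma tendsto_volterra_conv:
  assumes "continuous_on {0..1} \<beta>" "\<And>n. continuous_on {0..1} (h n)"
    and "uniform_limit {0..1} h g sequentially" and "x \<in> {0..1}"
  shows "(\<lambda>n. volterra_conv \<beta> (h n) x) \<longlonglongrightarrow> volterra_conv \<beta> g x"
proof -
  have sub: "{0..x} \<subseteq> {0..1}" using assms(4) by auto
  have "continuous_on {0..1} g"
    using assms(2,3) by (intro uniform_limit_theorem) auto
  then have "bounded (g ` {0..x})"
    by (intro compact_imp_bounded compact_continuous_image continuous_on_subset[OF _ sub] compact_Icc)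
  moreover have "bounded ((\<lambda>y. \<beta> (x - y)) ` {0..x})"
    using assms(1,4)
    by (intro compact_imp_bounded compact_continuous_image continuous_on_compose2[OF assms(1)]
        continuous_intros) auto
  ultimately have "uniform_limit {0..x} (\<lambda>n y. \<beta> (x - y) * h n y) (\<lambda>y. \<beta> (x - y) * g y) sequentially"
    by (intro uniform_lim_mult uniform_limit_const uniform_limit_on_subset[OF assms(3) sub])
  then obtain I J where I: "\<And>n. ((\<lambda>y. \<beta> (x - y) * h n y) has_integral I n) {0..x}"
    and J: "((\<lambda>y. \<beta> (x - y) * g y) has_integral J) {0..x}" and "I \<longlonglongrightarrow> J"
    by (rule uniform_limit_integral) (use assms in \<open>auto intro: continuous_on_volterra_integrand\<close>)
  moreover have "volterra_conv \<beta> (h n) x = I n" for n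
    unfolding volterra_conv_def using I by (rule integral_unique)
  moreover have "volterra_conv \<beta> g x = J"
    unfolding volterra_conv_def using J by (rule integral_unique)
  ultimately show ?thesis by simp
qed

definition is_kernel :: "(real \<Rightarrow> real) \<Rightarrow> (real \<Rightarrow> real) \<Rightarrow> bool" where
  "is_kernel \<beta> k \<longleftrightarrow> continuous_on {0..1} k \<and> (\<forall>x\<in>{0..1}. k x = - \<beta> x + volterra_conv \<beta> k x)"

primrec picard_iterate :: "(real \<Rightarrow> real) \<Rightarrow> nat \<Rightarrow> real \<Rightarrow> real" where
  "picard_iterate \<beta> 0 = (\<lambda>x. 0)"
| "picard_iterate \<beta> (Suc n) = (\<lambda>x. - \<beta> x + volterra_conv \<beta> (picard_iterate \<beta> n) x)"

lemma continuous_on_picard_iterate: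
  "continuous_on {0..1} \<beta> \<Longrightarrow> continuous_on {0..1} (picard_iterate \<beta> n)"
  by (induction n) (auto intro!: continuous_intros continuous_on_volterra_conv)

lemma picard_iterate_step_bound:
  assumes cont: "continuous_on {0..1} \<beta>" and bound: "\<And>y. y \<in> {0..1} \<Longrightarrow> \<bar>\<beta> y\<bar> \<le> B"
    and "x \<in> {0..1}"
  shows "\<bar>picard_iterate \<beta> (Suc n) x - picard_iterate \<beta> n x\<bar> \<le> B ^ Suc n * x ^ n / fact n"
  using \<open>x \<in> {0..1}\<close>
proof (induction n arbitrary: x)
  case 0
  then show ?case using bound by (simp add: volterra_conv_def)
next
  case (Suc n)
  let ?p = "picard_iterate \<beta>"
  have B: "B \<ge> 0" using bound[of 0] by simp
  have cont_p: "continuous_on {0..1} (?p m)" for m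
    using cont by (rule continuous_on_picard_iterate)
  have "continuous_on {0..1} (\<lambda>y. \<bar>?p (Suc n) y - ?p n y\<bar>)"
    by (intro continuous_intros cont_p)
  then have cont_diff: "continuous_on {0..x} (\<lambda>y. \<bar>?p (Suc n) y - ?p n y\<bar>)"
    by (rule continuous_on_subset) (use Suc.prems in auto)
  have step: "?p (Suc (Suc n)) x - ?p (Suc n) x = volterra_conv \<beta> (\<lambda>y. ?p (Suc n) y - ?p n y) x"
    using volterra_conv_diff[OF cont cont cont_p cont_p Suc.prems, of "Suc n" n]
    by (simp add: volterra_conv_def)
  have "\<bar>?p (Suc (Suc n)) x - ?p (Suc n) x\<bar>
      \<le> B * integral {0..x} (\<lambda>y. \<bar>?p (Suc n) y - ?p n y\<bar>)"
    unfolding step by (rule abs_volterra_conv_le[OF cont _ Suc.prems bound]) (intro continuous_intros cont_p)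
  also have "\<dots> \<le> B * integral {0..x} (\<lambda>y. B ^ Suc n / fact n * y ^ n)"
    using Suc.IH Suc.prems B cont_diff
    by (intro mult_left_mono integral_le integrable_continuous_interval)
       (auto intro!: continuous_intros)
  also have "\<dots> = B ^ Suc (Suc n) * x ^ Suc n / fact (Suc n)"
    using Suc.prems by (simp add: integral_power_0 del: of_nat_Suc)
  finally show ?case .
qed

lemma picard_iterate_uniformly_convergent:
  assumes "continuous_on {0..1} \<beta>"
  shows "uniformly_convergent_on {0..1} (picard_iterate \<beta>)"
proof -
  let ?p = "picard_iterate \<beta>"
  define B where "B = supnorm \<beta>"
  have bound: "\<And>y. y \<in> {0..1} \<Longrightarrow> \<bar>\<beta> y\<bar> \<le> B"
    unfolding B_def using assms by (rule abs_le_supnorm)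
  have "uniformly_convergent_on {0..1} (\<lambda>n x. \<Sum>i<n. ?p (Suc i) x - ?p i x)"
  proof (rule Weierstrass_m_test')
    fix i x assume x: "(x::real) \<in> {0..1}"
    have "\<bar>?p (Suc i) x - ?p i x\<bar> \<le> B ^ Suc i * x ^ i / fact i"
      using picard_iterate_step_bound[OF assms bound x] .
    also have "\<dots> \<le> B * (inverse (fact i) * B ^ i)"
      using x bound[of 0] by (auto simp: field_simps intro!: mult_left_mono mult_left_le power_le_one)
    finally show "norm (?p (Suc i) x - ?p i x) \<le> B * (inverse (fact i) * B ^ i)" by simp
  qed (intro summable_mult summable_exp)
  moreover have "(\<Sum>i<n. ?p (Suc i) x - ?p i x) = ?p n x" for n x
    using sum_lessThan_telescope[of "\<lambda>i. ?p i x" n] by (simp only: picard_iterate.simps(1) diff_zero)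
  ultimately show ?thesis by simp
qed

lemma is_kernel_exists:
  assumes "continuous_on {0..1} \<beta>"
  shows "\<exists>k. is_kernel \<beta> k"
proof -
  let ?p = "picard_iterate \<beta>"
  obtain k where lim: "uniform_limit {0..1} ?p k sequentially"
    using picard_iterate_uniformly_convergent[OF assms] by (auto simp: uniformly_convergent_on_def)
  have cont_p: "continuous_on {0..1} (?p n)" for n
    using assms by (rule continuous_on_picard_iterate)
  have "k x = - \<beta> x + volterra_conv \<beta> k x" if x: "x \<in> {0..1}" for x
  proof (rule LIMSEQ_unique)
    show "(\<lambda>n. ?p (Suc n) x) \<longlonglongrightarrow> k x"
      using tendsto_uniform_limitI[OF lim x] by (rule LIMSEQ_Suc)
    show "(\<lambda>n. ?p (Suc n) x) \<longlonglongrightarrow> - \<beta> x + volterra_conv \<beta> k x"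
      using tendsto_volterra_conv[OF assms cont_p lim x] by (auto intro: tendsto_intros)
  qed
  moreover have "continuous_on {0..1} k"
    using cont_p lim by (intro uniform_limit_theorem) auto
  ultimately show ?thesis unfolding is_kernel_def by blast
qed

lemma is_kernel_stability:
  assumes cont: "continuous_on {0..1} \<beta>1" "continuous_on {0..1} \<beta>2"
    and kernel: "is_kernel \<beta>1 k1" "is_kernel \<beta>2 k2"
    and \<delta>: "\<And>y. y \<in> {0..1} \<Longrightarrow> \<bar>\<beta>1 y - \<beta>2 y\<bar> \<le> \<delta>"
    and B: "\<And>y. y \<in> {0..1} \<Longrightarrow> \<bar>\<beta>2 y\<bar> \<le> B"
    and K: "\<And>y. y \<in> {0..1} \<Longrightarrow> \<bar>k1 y\<bar> \<le> K"
    and x: "x \<in> {0..1}"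
  shows "\<bar>k1 x - k2 x\<bar> \<le> \<delta> * (1 + K) * exp B"
proof -
  have "\<delta> \<ge> 0" "B \<ge> 0" "K \<ge> 0"
    using \<delta>[of 0] B[of 0] K[of 0] by auto
  have cont_k: "continuous_on {0..1} k1" "continuous_on {0..1} k2"
    using kernel unfolding is_kernel_def by auto
  have "\<bar>k1 x - k2 x\<bar> \<le> \<delta> * (1 + K) * exp (B * x)"
  proof (rule gronwall_integral_inequality[where T = 1])
    show "continuous_on {0..1} (\<lambda>y. \<bar>k1 y - k2 y\<bar>)"
      by (intro continuous_intros cont_k)
    fix t :: real assume t: "t \<in> {0..1}"
    have "k1 t - k2 t = - (\<beta>1 t - \<beta>2 t) + volterra_conv (\<lambda>s. \<beta>1 s - \<beta>2 s) k1 t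
        + volterra_conv \<beta>2 (\<lambda>y. k1 y - k2 y) t"
      using kernel t volterra_conv_diff[OF cont cont_k t] unfolding is_kernel_def by auto
    moreover have "\<bar>volterra_conv (\<lambda>s. \<beta>1 s - \<beta>2 s) k1 t\<bar> \<le> \<delta> * K"
      using cont cont_k t \<delta> K by (intro abs_volterra_conv_le_mult) (auto intro!: continuous_intros)
    moreover have "\<bar>volterra_conv \<beta>2 (\<lambda>y. k1 y - k2 y) t\<bar>
        \<le> B * integral {0..t} (\<lambda>y. \<bar>k1 y - k2 y\<bar>)"
      using cont cont_k t B by (intro abs_volterra_conv_le) (auto intro!: continuous_intros)
    ultimately show "\<bar>k1 t - k2 t\<bar> \<le> \<delta> * (1 + K) + B * integral {0..t} (\<lambda>y. \<bar>k1 y - k2 y\<bar>)"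
      using \<delta>[OF t] by (simp add: algebra_simps abs_le_iff)
  qed (use \<open>B \<ge> 0\<close> x in auto)
  also have "\<dots> \<le> \<delta> * (1 + K) * exp B"
    using x \<open>\<delta> \<ge> 0\<close> \<open>B \<ge> 0\<close> \<open>K \<ge> 0\<close> by (intro mult_left_mono) (auto simp: mult_left_le)
  finally show ?thesis .
qed

lemma is_kernel_cong:
  assumes "is_kernel \<beta> k" and "\<And>x. x \<in> {0..1} \<Longrightarrow> k' x = k x"
  shows "is_kernel \<beta> k'"
proof -
  have "volterra_conv \<beta> k' x = volterra_conv \<beta> k x" if "x \<in> {0..1}" for x
    unfolding volterra_conv_def using that assms(2) by (intro integral_cong) auto
  moreover have "continuous_on {0..1} k'"
    using assms unfolding is_kernel_def by (metis continuous_on_eq)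
  ultimately show ?thesis
    using assms unfolding is_kernel_def by simp
qed

lemma is_kernel_kernel_op:
  assumes "continuous_on {0..1} \<beta>"
  shows "is_kernel \<beta> (kernel_op \<beta>)"
proof -
  define P where "P k \<longleftrightarrow> is_kernel \<beta> k \<and> (\<forall>x. x \<notin> {0..1} \<longrightarrow> k x = 0)" for k
  obtain k where "is_kernel \<beta> k"
    using is_kernel_exists[OF assms] ..
  then have "P (\<lambda>x. if x \<in> {0..1} then k x else 0)"
    unfolding P_def by (auto intro: is_kernel_cong[of \<beta> k])
  moreover have "k1 = k2" if "P k1" "P k2" for k1 k2
  proof
    fix x
    show "k1 x = k2 x"
    proof (cases "x \<in> {0..1}")
      case True
      have "continuous_on {0..1} k1"
        using that unfolding P_def is_kernel_def by auto
      then have "\<bar>k1 x - k2 x\<bar> \<le> 0 * (1 + supnorm k1) * exp (supnorm \<beta>)"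
        using that True abs_le_supnorm[OF assms] abs_le_supnorm[of k1] unfolding P_def
        by (intro is_kernel_stability[OF assms assms]) auto
      then show ?thesis by simp
    qed (use that in \<open>auto simp: P_def\<close>)
  qed
  ultimately have "\<exists>!k. P k"
    by blast
  then have "P (THE k. P k)"
    by (rule theI')
  moreover have "kernel_op \<beta> = (THE k. P k)"
    unfolding kernel_op_def P_def is_kernel_def volterra_conv_def by (simp add: conj_assoc)
  ultimately show ?thesis
    unfolding P_def by simp
qed

lemma abs_kernel_op_le:
  assumes "continuous_on {0..1} \<beta>" and "\<And>y. y \<in> {0..1} \<Longrightarrow> \<bar>\<beta> y\<bar> \<le> B"
    and "x \<in> {0..1}"
  shows "\<bar>kernel_op \<beta> x\<bar> \<le> B * exp B"
proof -
  have "is_kernel (\<lambda>_. 0) (\<lambda>_. 0)"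
    by (simp add: is_kernel_def volterra_conv_def)
  then have "\<bar>0 - kernel_op \<beta> x\<bar> \<le> B * (1 + 0) * exp B"
    using assms by (intro is_kernel_stability[OF continuous_on_const assms(1) _ is_kernel_kernel_op]) auto
  then show ?thesis by simp
qed

lemma kernel_op_diff_le:
  assumes "continuous_on {0..1} \<beta>1" "continuous_on {0..1} \<beta>2"
    and "\<And>y. y \<in> {0..1} \<Longrightarrow> \<bar>\<beta>1 y\<bar> \<le> B" "\<And>y. y \<in> {0..1} \<Longrightarrow> \<bar>\<beta>2 y\<bar> \<le> B"
    and "x \<in> {0..1}"
  shows "\<bar>kernel_op \<beta>1 x - kernel_op \<beta>2 x\<bar> \<le> supnorm (\<lambda>y. \<beta>1 y - \<beta>2 y) * exp (3 * B)"
proof -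
  define \<delta> where "\<delta> = supnorm (\<lambda>y. \<beta>1 y - \<beta>2 y)"
  have "B \<ge> 0" using assms(3)[of 0] by simp
  have "\<delta> \<ge> 0"
    unfolding \<delta>_def using assms(1,2) by (intro supnorm_nonneg continuous_intros)
  have "continuous_on {0..1} (\<lambda>y. \<beta>1 y - \<beta>2 y)"
    using assms(1,2) by (intro continuous_intros)
  then have "\<bar>kernel_op \<beta>1 x - kernel_op \<beta>2 x\<bar> \<le> \<delta> * (1 + B * exp B) * exp B"
    unfolding \<delta>_def using assms abs_le_supnorm abs_kernel_op_le[OF assms(1,3)]
    by (intro is_kernel_stability[OF assms(1,2) is_kernel_kernel_op is_kernel_kernel_op]) auto
  also have "\<dots> \<le> \<delta> * exp (3 * B)"
  proof -
    have "1 + B * exp B \<le> exp B * (1 + B)"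
      using \<open>B \<ge> 0\<close> by (simp add: algebra_simps)
    also have "\<dots> \<le> exp B * exp B"
      using exp_ge_add_one_self[of B] by (intro mult_left_mono) auto
    finally have "(1 + B * exp B) * exp B \<le> exp B * exp B * exp B"
      by (intro mult_right_mono) auto
    also have "\<dots> = exp (3 * B)"
      by (simp flip: exp_add)
    finally show ?thesis
      using \<open>\<delta> \<ge> 0\<close> by (simp add: mult_left_mono mult.assoc)
  qed
  finally show ?thesis unfolding \<delta>_def .
qed

lemma abs_integral_unit_le:
  fixes f :: "real \<Rightarrow> real"
  assumes "continuous_on {0..1} f" and "\<And>y. y \<in> {0..1} \<Longrightarrow> \<bar>f y\<bar> \<le> M"
  shows "\<bar>integral {0..1} f\<bar> \<le> M"
  using integral_bound[of 0 1 f M] assms by simp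

lemma U_op_diff_le:
  assumes cont: "continuous_on {0..1} \<beta>1" "continuous_on {0..1} \<beta>2"
    "continuous_on {0..1} u1" "continuous_on {0..1} u2"
    and \<beta>: "\<And>y. y \<in> {0..1} \<Longrightarrow> \<bar>\<beta>1 y\<bar> \<le> B" "\<And>y. y \<in> {0..1} \<Longrightarrow> \<bar>\<beta>2 y\<bar> \<le> B"
    and u: "\<And>y. y \<in> {0..1} \<Longrightarrow> \<bar>u1 y\<bar> \<le> Bu"
  shows "\<bar>U_op \<beta>1 u1 - U_op \<beta>2 u2\<bar>
    \<le> Bu * exp (3 * B) * supnorm (\<lambda>x. \<beta>1 x - \<beta>2 x) + B * exp B * supnorm (\<lambda>x. u1 x - u2 x)"
proof -
  define k1 where "k1 y = kernel_op \<beta>1 (1 - y)" for y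
  define k2 where "k2 y = kernel_op \<beta>2 (1 - y)" for y
  have "continuous_on {0..1} (kernel_op \<beta>1)" "continuous_on {0..1} (kernel_op \<beta>2)"
    using is_kernel_kernel_op[OF cont(1)] is_kernel_kernel_op[OF cont(2)]
    unfolding is_kernel_def by blast+
  then have cont_k: "continuous_on {0..1} k1" "continuous_on {0..1} k2"
    unfolding k1_def k2_def
    by (auto intro!: continuous_on_compose2[where f = "\<lambda>y. 1 - y"] continuous_intros)
  have integrable: "(\<lambda>y. f y * g y) integrable_on {0..1}"
    if "continuous_on {0..1} f" "continuous_on {0..1} g" for f g :: "real \<Rightarrow> real"
    using that by (intro integrable_continuous_interval continuous_intros)
  have "U_op \<beta>1 u1 - U_op \<beta>2 u2 = integral {0..1} (\<lambda>y. k1 y * u1 y - k2 y * u2 y)"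
    unfolding U_op_def k1_def[symmetric] k2_def[symmetric]
    using cont cont_k by (intro integral_diff[symmetric] integrable)
  also have "\<dots> = integral {0..1} (\<lambda>y. (k1 y - k2 y) * u1 y + k2 y * (u1 y - u2 y))"
    by (simp add: algebra_simps)
  also have "\<dots> = integral {0..1} (\<lambda>y. (k1 y - k2 y) * u1 y)
      + integral {0..1} (\<lambda>y. k2 y * (u1 y - u2 y))"
    using cont cont_k by (intro integral_add integrable continuous_intros)
  finally have "\<bar>U_op \<beta>1 u1 - U_op \<beta>2 u2\<bar> \<le> \<bar>integral {0..1} (\<lambda>y. (k1 y - k2 y) * u1 y)\<bar>
      + \<bar>integral {0..1} (\<lambda>y. k2 y * (u1 y - u2 y))\<bar>"
    by simp
  also have "\<dots> \<le> supnorm (\<lambda>x. \<beta>1 x - \<beta>2 x) * exp (3 * B) * Bu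
      + B * exp B * supnorm (\<lambda>x. u1 x - u2 x)"
  proof (intro add_mono abs_integral_unit_le)
    fix y :: real assume y: "y \<in> {0..1}"
    then have "1 - y \<in> {0..1}" by simp
    show "\<bar>(k1 y - k2 y) * u1 y\<bar> \<le> supnorm (\<lambda>x. \<beta>1 x - \<beta>2 x) * exp (3 * B) * Bu"
      unfolding k1_def k2_def abs_mult
      using kernel_op_diff_le[OF cont(1,2) \<beta> \<open>1 - y \<in> _\<close>] u[OF y]
      by (intro mult_mono) auto
    show "\<bar>k2 y * (u1 y - u2 y)\<bar> \<le> B * exp B * supnorm (\<lambda>x. u1 x - u2 x)"
      unfolding k2_def abs_mult
      using abs_kernel_op_le[OF cont(2) \<beta>(2) \<open>1 - y \<in> _\<close>] abs_le_supnorm[OF _ y, of "\<lambda>x. u1 x - u2 x"] cont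
      by (intro mult_mono) (auto intro!: continuous_intros)
  qed (use cont cont_k in \<open>auto intro!: continuous_intros\<close>)
  finally show ?thesis by (simp add: algebra_simps)
qed

theorem lemma4:
  fixes \<beta>1 \<beta>2 u1 u2 :: "real \<Rightarrow> real" and B\<beta> Bu :: real
  assumes "B\<beta> > 0" and "Bu > 0"
    and "\<exists>L. L-lipschitz_on {0..1} \<beta>1" and "\<exists>L. L-lipschitz_on {0..1} \<beta>2"
    and "\<exists>L. L-lipschitz_on {0..1} u1" and "\<exists>L. L-lipschitz_on {0..1} u2"
    and "supnorm \<beta>1 \<le> B\<beta>" and "supnorm \<beta>2 \<le> B\<beta>"
    and "supnorm u1 \<le> Bu" and "supnorm u2 \<le> Bu"
  shows "\<bar>U_op \<beta>1 u1 - U_op \<beta>2 u2\<bar>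
    \<le> (B\<beta> * exp B\<beta> + Bu * exp (3 * B\<beta>)) *
       max (supnorm (\<lambda>x. \<beta>1 x - \<beta>2 x)) (supnorm (\<lambda>x. u1 x - u2 x))"
proof -
  have cont: "continuous_on {0..1} \<beta>1" "continuous_on {0..1} \<beta>2"
    "continuous_on {0..1} u1" "continuous_on {0..1} u2"
    using assms(3-6) by (auto intro: lipschitz_on_continuous_on)
  let ?\<delta>\<beta> = "supnorm (\<lambda>x. \<beta>1 x - \<beta>2 x)" and ?\<delta>u = "supnorm (\<lambda>x. u1 x - u2 x)"
  have "\<bar>U_op \<beta>1 u1 - U_op \<beta>2 u2\<bar> \<le> Bu * exp (3 * B\<beta>) * ?\<delta>\<beta> + B\<beta> * exp B\<beta> * ?\<delta>u"
    using cont order_trans[OF abs_le_supnorm] assms(7-9) by (intro U_op_diff_le) blast+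
  also have "\<dots> \<le> Bu * exp (3 * B\<beta>) * max ?\<delta>\<beta> ?\<delta>u + B\<beta> * exp B\<beta> * max ?\<delta>\<beta> ?\<delta>u"
    using assms(1,2) by (intro add_mono mult_left_mono) auto
  finally show ?thesis by (simp add: algebra_simps)
qed

end
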